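(* Let $k\ge1$ and let $s_1,s_2\ge0$ be integers with $s_1+s_2\le k$. The determinant of the Gram matrix $G^k_{2s_1+s_2}$ (defined in the context) is a nonzero polynomial in $\mathbb{Z}[x]$ with leading coefficient $1$.
   Context: Let $\mathbb{Z}_2=\{e,g\}$ act on $X=([k]\cup[k'])\times\mathbb{Z}_2$ by $h\cdot(i,a)=(i,ha)$, where $[k]=\{1,\dots,k\}$, $[k']=\{1',\dots,k'\}$. A set partition of a $\mathbb{Z}_2$-stable set is $\mathbb{Z}_2$-stable if $g$ maps blocks to blocks. Identifying $(i,e)\mapsto 2i-1$, $(i,g)\mapsto 2i$ (and similarly for primed vertices), a $\mathbb{Z}_2$-stable set partition of $X$ is a $2k$-partition diagram (top row $[k]\times\mathbb{Z}_2$, bottom row $[k']\times\mathbb{Z}_2$). For partition diagrams: a block meeting both rows is a through class, the propagating number $\sharp^p(d)$ is the number of through classes; the product of $d_1,d_2$ is obtained by placing $d_1$ above $d_2$, identifying bottom vertices of $d_1$ with top vertices of $d_2$, taking the induced partition $d_3$ of the outer rows, and $l(d_1,d_2)$ is the number of connected components lying entirely in the middle row; $\sharp^p(d_1d_2)$ means $\sharp^p(d_3)$. Index set: a block $B$ of a $\mathbb{Z}_2$-stable partition $\pi$ of $[k]\times\mathbb{Z}_2$ is a $\mathbb{Z}_2$-block if $gB=B$ and an $\{e\}$-block otherwise (then $gB\neq B$ is also a block). $J^{2k}_{2s_1+s_2}$ is the set of pairs $D=(\pi,T)$ with $\pi$ a $\mathbb{Z}_2$-stable partition of $[k]\times\mathbb{Z}_2$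 and $T$ a $g$-stable set of blocks of $\pi$ consisting of $s_1$ pairs $\{B,gB\}$ of $\{e\}$-blocks and $s_2$ $\mathbb{Z}_2$-blocks. The diagram $d_D$ has blocks $B\cup B'$ for $B\in T$, and $B$, $B'$ separately for $B\in\pi\setminus T$, where $B'=\{(i',a):(i,a)\in B\}$. The Gram matrix $G^k_{2s_1+s_2}$ has rows and columns indexed by $J^{2k}_{2s_1+s_2}$, with $(D,E)$ entry $x^{l(d_D,d_E)}$ if $\sharp^p(d_Dd_E)=2s_1+s_2$ and $0$ otherwise. *)

theory Defs
  imports "HOL-Combinatorics.Permutations" "HOL-Computational_Algebra.Polynomial"
          "HOL-Library.Disjoint_Sets"
begin

text \<open>Z2 = {e,g} is modelled by bool: False = e, True = g; g acts by negation.
  A vertex of a partition diagram is (r, i, a) with r = False for the top row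
  ([k] x Z2) and r = True for the bottom row ([k'] x Z2).\<close>

type_synonym vtx = "nat \<times> bool"
type_synonym dvtx = "bool \<times> nat \<times> bool"

definition gact :: "vtx \<Rightarrow> vtx" where
  "gact v = (fst v, \<not> snd v)"

definition base :: "nat \<Rightarrow> vtx set" where
  "base k = {1..k} \<times> UNIV"

definition Z2_stable_partition :: "nat \<Rightarrow> vtx set set \<Rightarrow> bool" where
  "Z2_stable_partition k \<pi> \<longleftrightarrow> partition_on (base k) \<pi> \<and> (\<forall>B\<in>\<pi>. gact ` B \<in> \<pi>)"

definition Jset :: "nat \<Rightarrow> nat \<Rightarrow> nat \<Rightarrow> (vtx set set \<times> vtx set set) set" where
  "Jset k s1 s2 = {(\<pi>, T). Z2_stable_partition k \<pi> \<and> T \<subseteq> \<pi> \<and> (\<forall>B\<in>T. gact ` B \<in> T)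
      \<and> card {{B, gact ` B} | B. B \<in> T \<and> gact ` B \<noteq> B} = s1
      \<and> card {B \<in> T. gact ` B = B} = s2}"

definition top_copy :: "vtx set \<Rightarrow> dvtx set" where
  "top_copy B = (\<lambda>v. (False, v)) ` B"

definition bot_copy :: "vtx set \<Rightarrow> dvtx set" where
  "bot_copy B = (\<lambda>v. (True, v)) ` B"

definition diag :: "vtx set set \<times> vtx set set \<Rightarrow> dvtx set set" where
  "diag D = (case D of (\<pi>, T) \<Rightarrow>
     {top_copy B \<union> bot_copy B | B. B \<in> T} \<union> {top_copy B | B. B \<in> \<pi> - T}
     \<union> {bot_copy B | B. B \<in> \<pi> - T})"

definition prop_num :: "dvtx set set \<Rightarrow> nat" where
  "prop_num d = card {B \<in> d. (\<exists>v. (False, v) \<in> B) \<and> (\<exists>v. (True, v) \<in> B)}"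

text \<open>Stacking d1 above d2: three layers 0 (top of d1), 1 (middle), 2 (bottom of d2).\<close>
definition lay1 :: "dvtx \<Rightarrow> nat \<times> vtx" where
  "lay1 x = (if fst x then 1 else 0, snd x)"

definition lay2 :: "dvtx \<Rightarrow> nat \<times> vtx" where
  "lay2 x = (if fst x then 2 else 1, snd x)"

definition stack_rel :: "dvtx set set \<Rightarrow> dvtx set set \<Rightarrow> ((nat \<times> vtx) \<times> (nat \<times> vtx)) set" where
  "stack_rel d1 d2 = {(x, y). (\<exists>B\<in>d1. x \<in> lay1 ` B \<and> y \<in> lay1 ` B)
                          \<or> (\<exists>B\<in>d2. x \<in> lay2 ` B \<and> y \<in> lay2 ` B)}"

definition stack_comps :: "dvtx set set \<Rightarrow> dvtx set set \<Rightarrow> (nat \<times> vtx) set set" where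
  "stack_comps d1 d2 = (\<Union>(((`) lay1) ` d1) \<union> \<Union>(((`) lay2) ` d2)) // ((stack_rel d1 d2)\<^sup>*)"

definition unlay :: "nat \<times> vtx \<Rightarrow> dvtx" where
  "unlay x = (fst x = 2, snd x)"

definition diag_prod :: "dvtx set set \<Rightarrow> dvtx set set \<Rightarrow> dvtx set set" where
  "diag_prod d1 d2 = {unlay ` (C \<inter> {c. fst c \<noteq> 1}) | C. C \<in> stack_comps d1 d2 \<and> (\<exists>c\<in>C. fst c \<noteq> 1)}"

definition lmid :: "dvtx set set \<Rightarrow> dvtx set set \<Rightarrow> nat" where
  "lmid d1 d2 = card {C \<in> stack_comps d1 d2. \<forall>c\<in>C. fst c = 1}"

definition gram_entry :: "nat \<Rightarrow> nat \<Rightarrow> (vtx set set \<times> vtx set set) \<Rightarrow> (vtx set set \<times> vtx set set) \<Rightarrow> int poly" where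
  "gram_entry s1 s2 D E =
     (if prop_num (diag_prod (diag D) (diag E)) = 2 * s1 + s2
      then monom 1 (lmid (diag D) (diag E)) else 0)"

definition det_on :: "'i set \<Rightarrow> ('i \<Rightarrow> 'i \<Rightarrow> 'a::comm_ring_1) \<Rightarrow> 'a" where
  "det_on I M = (\<Sum>p \<in> {p. p permutes I}. of_int (sign p) * (\<Prod>i\<in>I. M i (p i)))"

definition gram_det :: "nat \<Rightarrow> nat \<Rightarrow> nat \<Rightarrow> int poly" where
  "gram_det k s1 s2 = det_on (Jset k s1 s2) (gram_entry s1 s2)"

end

(* Every entry of the Gram matrix is 0 or a power of x. Stack d_D above d_E, where D = (pi1, T1)
   and E = (pi2, T2). A component lying in the middle row is the component of a block of
   pi1 - T1 and also of a block of pi2 - T2, and a through class comes from a block of T1 and of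
   T2; hence l(d_D, d_E) <= min(|pi1 - T1|, |pi2 - T2|) and the propagating number is at most |T1|.
   For D = E these bounds are attained. A nonzero entry has propagating number 2 s1 + s2 = |T1| = |T2|,
   and if l also attained both bounds, the middle components would match the blocks of pi1 with
   those of pi2 and T1 with T2, forcing D = E. So the diagonal entry at D is x^|pi - T|, and every
   nonzero off-diagonal entry has degree strictly below the mean of the two diagonal degrees. In
   the Leibniz expansion only the identity permutation then reaches the degree
   sum_D |pi_D - T_D|, with coefficient 1. *)

theory Submission
  imports Defs
begin

section \<open>Monic determinants\<close>

lemma prod_monom_one:
  "finite I \<Longrightarrow> (\<Prod>i\<in>I. monom (1::'a::comm_semiring_1) (f i)) = monom 1 (\<Sum>i\<in>I. f i)"
  by (induction I rule: finite_induct) (simp_all add: mult_monom monom_0 one_pCons)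

lemma degree_prod_lt_if_not_id:
  fixes M :: "'i \<Rightarrow> 'i \<Rightarrow> 'a::comm_ring_1 poly" and f :: "'i \<Rightarrow> nat"
  assumes fin: "finite I" and p: "p permutes I" "p \<noteq> id"
    and diag: "\<And>i. i \<in> I \<Longrightarrow> M i i = monom 1 (f i)"
    and off_diag: "\<And>i j. i \<in> I \<Longrightarrow> j \<in> I \<Longrightarrow> i \<noteq> j \<Longrightarrow> M i j \<noteq> 0 \<Longrightarrow>
      2 * degree (M i j) < f i + f j"
    and nz: "\<And>i. i \<in> I \<Longrightarrow> M i (p i) \<noteq> 0"
  shows "degree (\<Prod>i\<in>I. M i (p i)) < (\<Sum>i\<in>I. f i)"
proof -
  have pI: "p i \<in> I" if "i \<in> I" for i
    using p(1) that by (simp add: permutes_in_image)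
  have le: "2 * degree (M i (p i)) \<le> f i + f (p i)" if "i \<in> I" for i
    using that diag[of i] off_diag[OF that pI[OF that] _ nz[OF that]]
    by (cases "p i = i") (simp_all add: degree_monom_eq)
  obtain i where i: "i \<in> I" "p i \<noteq> i"
    using p by (metis eq_id_iff permutes_not_in)
  have "2 * degree (\<Prod>i\<in>I. M i (p i)) \<le> (\<Sum>i\<in>I. 2 * degree (M i (p i)))"
    using degree_prod_sum_le[OF fin, of "\<lambda>i. M i (p i)"] by (simp add: sum_distrib_left[symmetric])
  also have "\<dots> < (\<Sum>i\<in>I. f i + f (p i))"
    using sum_strict_mono_ex1[OF fin, of "\<lambda>i. 2 * degree (M i (p i))" "\<lambda>i. f i + f (p i)"]
      le i off_diag[OF i(1) pI[OF i(1)] i(2)[symmetric] nz[OF i(1)]] by auto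
  also have "\<dots> = 2 * (\<Sum>i\<in>I. f i)"
    using sum.permute[OF p(1), of f] by (simp add: sum.distrib comp_def)
  finally show ?thesis by simp
qed

lemma det_on_monic:
  fixes M :: "'i \<Rightarrow> 'i \<Rightarrow> 'a::comm_ring_1 poly" and f :: "'i \<Rightarrow> nat"
  assumes fin: "finite I"
    and diag: "\<And>i. i \<in> I \<Longrightarrow> M i i = monom 1 (f i)"
    and off_diag: "\<And>i j. i \<in> I \<Longrightarrow> j \<in> I \<Longrightarrow> i \<noteq> j \<Longrightarrow> M i j \<noteq> 0 \<Longrightarrow>
      2 * degree (M i j) < f i + f j"
  shows "degree (det_on I M) = (\<Sum>i\<in>I. f i)" and "lead_coeff (det_on I M) = 1"
proof -
  define N where "N = (\<Sum>i\<in>I. f i)"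
  have term_coeff: "coeff (of_int (sign p) * (\<Prod>i\<in>I. M i (p i))) n = (if p = id \<and> n = N then 1 else 0)"
    if p: "p permutes I" and n: "N \<le> n" for p n
  proof (cases "p = id")
    case True
    have "(\<Prod>i\<in>I. M i (p i)) = monom 1 N"
      using prod_monom_one[OF fin, of f] diag by (simp add: True N_def)
    then show ?thesis using True by (simp add: of_int_poly)
  next
    case False
    show ?thesis
    proof (cases "\<forall>i\<in>I. M i (p i) \<noteq> 0")
      case True
      then have "degree (\<Prod>i\<in>I. M i (p i)) < N"
        unfolding N_def by (intro degree_prod_lt_if_not_id[OF fin p False]) (use diag off_diag in auto)
      then show ?thesis using False n by (simp add: of_int_poly coeff_eq_0)
    qed (use False fin in \<open>auto simp: prod_zero\<close>)
  qed
  have coeff_det: "coeff (det_on I M) n = (if n = N then 1 else 0)" if "N \<le> n" for n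
  proof -
    have "coeff (det_on I M) n =
        (\<Sum>p\<in>{p. p permutes I}. if p = id \<and> n = N then 1 else 0)"
      unfolding det_on_def coeff_sum by (rule sum.cong) (simp_all add: term_coeff that)
    then show ?thesis
      using finite_permutations[OF fin] by (simp add: sum.If_cases)
  qed
  have "degree (det_on I M) = N"
    using coeff_det by (intro antisym degree_le le_degree) auto
  then show "degree (det_on I M) = N" "lead_coeff (det_on I M) = 1"
    using coeff_det by simp_all
qed

section \<open>Partitions and counting\<close>

lemma partition_on_block_eq:
  "partition_on A P \<Longrightarrow> B \<in> P \<Longrightarrow> B' \<in> P \<Longrightarrow> v \<in> B \<Longrightarrow> v \<in> B' \<Longrightarrow> B = B'"
  unfolding partition_on_def disjoint_def by blast

lemma partition_on_eq_fibers:
  assumes P: "partition_on A P"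
    and label: "\<And>B v. B \<in> P \<Longrightarrow> v \<in> B \<Longrightarrow> g B = h v" and inj: "inj_on g P"
  shows "P = (\<lambda>v. {w \<in> A. h w = h v}) ` A"
proof -
  have fiber: "B = {w \<in> A. h w = h v}" if B: "B \<in> P" "v \<in> B" for B v
  proof (intro set_eqI iffI)
    fix w assume "w \<in> B"
    then show "w \<in> {w \<in> A. h w = h v}"
      using label[OF B(1)] B partition_onD1[OF P] by (metis (mono_tags, lifting) UnionI mem_Collect_eq)
  next
    fix w assume "w \<in> {w \<in> A. h w = h v}"
    then obtain B' where B': "B' \<in> P" "w \<in> B'" "h w = h v"
      using partition_onD1[OF P] by blast
    then have "g B' = g B"
      using label B by metis
    then show "w \<in> B"
      using inj_onD[OF inj _ B'(1) B(1)] B'(2) by simp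
  qed
  show ?thesis
  proof safe
    fix B assume "B \<in> P"
    then obtain v where "v \<in> B"
      using partition_onD3[OF P] by (metis equals0I)
    then show "B \<in> (\<lambda>v. {w \<in> A. h w = h v}) ` A"
      using fiber \<open>B \<in> P\<close> partition_onD1[OF P] by blast
  next
    fix v assume "v \<in> A"
    then obtain B where "B \<in> P" "v \<in> B"
      using partition_onD1[OF P] by blast
    then show "{w \<in> A. h w = h v} \<in> P"
      using fiber by simp
  qed
qed

lemma image_eq_inj_on_if_card_le:
  assumes "finite A" "B \<subseteq> f ` A" "card A \<le> card B"
  shows "B = f ` A \<and> inj_on f A"
proof -
  have "card B \<le> card (f ` A)" "card (f ` A) \<le> card A"
    using assms by (simp_all add: card_mono card_image_le)
  then have "card B = card (f ` A)" "card (f ` A) = card A"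
    using assms(3) by simp_all
  then show ?thesis
    using card_subset_eq[OF finite_imageI[OF assms(1)] assms(2)] eq_card_imp_inj_on[OF assms(1)]
    by simp
qed

lemma card_involution_orbits:
  assumes fin: "finite T" and closed: "\<And>x. x \<in> T \<Longrightarrow> f x \<in> T" and invol: "\<And>x. f (f x) = x"
  shows "card T = 2 * card {{x, f x} | x. x \<in> T \<and> f x \<noteq> x} + card {x \<in> T. f x = x}"
proof -
  define orbits where "orbits = {{x, f x} | x. x \<in> T \<and> f x \<noteq> x}"
  have orbit_eq: "{x, f x} = {z, f z}" if "z \<in> {x, f x}" for x z
    using that invol by auto
  have moved: "\<Union>orbits = {x \<in> T. f x \<noteq> x}"
  proof
    show "\<Union>orbits \<subseteq> {x \<in> T. f x \<noteq> x}"
      unfolding orbits_def using closed invol by (auto simp: insert_commute)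
    show "{x \<in> T. f x \<noteq> x} \<subseteq> \<Union>orbits"
      unfolding orbits_def by blast
  qed
  have "2 * card orbits = card (\<Union>orbits)"
  proof (rule card_partition)
    show "finite orbits"
      unfolding orbits_def using fin by simp
    show "finite (\<Union>orbits)"
      unfolding moved using fin by simp
    show "\<And>c. c \<in> orbits \<Longrightarrow> card c = 2"
      unfolding orbits_def by auto
    show "c1 \<inter> c2 = {}" if "c1 \<in> orbits" "c2 \<in> orbits" "c1 \<noteq> c2" for c1 c2
      using that orbit_eq unfolding orbits_def by blast
  qed
  moreover have "card T = card {x \<in> T. f x \<noteq> x} + card {x \<in> T. f x = x}"
    using fin by (subst card_Un_disjoint[symmetric]) (auto intro: arg_cong[where f = card])
  ultimately show ?thesis
    unfolding orbits_def[symmetric] moved by simp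
qed

section \<open>Stacking two diagrams\<close>

lemma bex_diag_iff:
  "(\<exists>X\<in>diag (p, t). P X) \<longleftrightarrow> (\<exists>B\<in>t. P (top_copy B \<union> bot_copy B))
     \<or> (\<exists>B\<in>p - t. P (top_copy B)) \<or> (\<exists>B\<in>p - t. P (bot_copy B))"
  unfolding diag_def by blast

lemma diag_layer_rel_iff:
  fixes a b :: nat and lay :: "dvtx \<Rightarrow> nat \<times> vtx"
  assumes "t \<subseteq> p" "a \<noteq> b" and lay: "\<And>z. lay z = (if fst z then b else a, snd z)"
  shows "(\<exists>X\<in>diag (p, t). x \<in> lay ` X \<and> y \<in> lay ` X) \<longleftrightarrow>
    (\<exists>B\<in>p. fst x \<in> {a, b} \<and> fst y \<in> {a, b} \<and> snd x \<in> B \<and> snd y \<in> B \<and> (fst x = fst y \<or> B \<in> t))"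
proof -
  have row: "lay ` top_copy B = Pair a ` B" "lay ` bot_copy B = Pair b ` B" for B
    unfolding lay top_copy_def bot_copy_def image_image by simp_all
  have mem: "z \<in> Pair c ` B \<longleftrightarrow> fst z = c \<and> snd z \<in> B" for z and c :: nat and B :: "vtx set"
    by (cases z) auto
  have "(\<exists>X\<in>diag (p, t). x \<in> lay ` X \<and> y \<in> lay ` X) \<longleftrightarrow>
      (\<exists>B\<in>t. x \<in> lay ` (top_copy B \<union> bot_copy B) \<and> y \<in> lay ` (top_copy B \<union> bot_copy B))
    \<or> (\<exists>B\<in>p - t. x \<in> lay ` top_copy B \<and> y \<in> lay ` top_copy B)
    \<or> (\<exists>B\<in>p - t. x \<in> lay ` bot_copy B \<and> y \<in> lay ` bot_copy B)"
    by (rule bex_diag_iff)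
  also have "\<dots> \<longleftrightarrow>
    (\<exists>B\<in>p. fst x \<in> {a, b} \<and> fst y \<in> {a, b} \<and> snd x \<in> B \<and> snd y \<in> B \<and> (fst x = fst y \<or> B \<in> t))"
    (is "?L \<longleftrightarrow> ?R")
  proof
    show "?L \<Longrightarrow> ?R"
      unfolding image_Un row Un_iff mem using assms(1) by auto
    show "?R \<Longrightarrow> ?L"
    proof (elim bexE conjE)
      fix B assume "B \<in> p" "fst x \<in> {a, b}" "fst y \<in> {a, b}" "snd x \<in> B" "snd y \<in> B"
        "fst x = fst y \<or> B \<in> t"
      then show ?L by (cases "B \<in> t") (auto simp: image_Un row mem)
    qed
  qed
  finally show ?thesis .
qed

definition outer_rows :: "(nat \<times> vtx) set \<Rightarrow> dvtx set" where
  "outer_rows C = unlay ` (C \<inter> {c. fst c \<noteq> 1})"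

locale stacked_diagrams =
  fixes A :: "vtx set" and p1 t1 p2 t2 :: "vtx set set"
  assumes finite_A: "finite A"
    and p1: "partition_on A p1" and p2: "partition_on A p2"
    and t1: "t1 \<subseteq> p1" and t2: "t2 \<subseteq> p2"
begin

abbreviation R :: "((nat \<times> vtx) \<times> (nat \<times> vtx)) set" where
  "R \<equiv> stack_rel (diag (p1, t1)) (diag (p2, t2))"

abbreviation comps :: "(nat \<times> vtx) set set" where
  "comps \<equiv> stack_comps (diag (p1, t1)) (diag (p2, t2))"

definition comp :: "nat \<times> vtx \<Rightarrow> (nat \<times> vtx) set" where
  "comp x = R\<^sup>* `` {x}"

definition block_comp :: "vtx set \<Rightarrow> (nat \<times> vtx) set" where
  "block_comp B = comp (1, SOME v. v \<in> B)"

definition mid_comps :: "(nat \<times> vtx) set set" where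
  "mid_comps = {C \<in> comps. \<forall>c\<in>C. fst c = 1}"

definition through_comps :: "(nat \<times> vtx) set set" where
  "through_comps = {C \<in> comps. (\<exists>v. (0, v) \<in> C) \<and> (\<exists>w. (2, w) \<in> C)}"

lemma stack_rel_iff:
  "(x, y) \<in> R \<longleftrightarrow>
    (\<exists>B\<in>p1. fst x \<in> {0, 1} \<and> fst y \<in> {0, 1} \<and> snd x \<in> B \<and> snd y \<in> B \<and> (fst x = fst y \<or> B \<in> t1))
  \<or> (\<exists>B\<in>p2. fst x \<in> {1, 2} \<and> fst y \<in> {1, 2} \<and> snd x \<in> B \<and> snd y \<in> B \<and> (fst x = fst y \<or> B \<in> t2))"
proof -
  have one_neq_two: "(1::nat) \<noteq> 2"
    by simp
  show ?thesis
    unfolding stack_rel_def mem_Collect_eq case_prod_conv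
    by (simp only: diag_layer_rel_iff[OF t1 zero_neq_one lay1_def]
        diag_layer_rel_iff[OF t2 one_neq_two lay2_def])
qed

lemma stack_rel_refl_iff: "(x, x) \<in> R \<longleftrightarrow> fst x \<le> 2 \<and> snd x \<in> A"
proof
  assume "(x, x) \<in> R"
  then show "fst x \<le> 2 \<and> snd x \<in> A"
    unfolding stack_rel_iff using partition_onD1[OF p1] partition_onD1[OF p2] by auto
next
  assume x: "fst x \<le> 2 \<and> snd x \<in> A"
  then obtain B1 B2 where "B1 \<in> p1" "snd x \<in> B1" "B2 \<in> p2" "snd x \<in> B2"
    using partition_onD1[OF p1] partition_onD1[OF p2] by blast
  then show "(x, x) \<in> R"
    unfolding stack_rel_iff using x by (cases "fst x \<le> 1") auto
qed

lemma sym_R: "sym R"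
  unfolding sym_def stack_rel_def by blast

lemma mem_comp_iff: "y \<in> comp x \<longleftrightarrow> (x, y) \<in> R\<^sup>*"
  unfolding comp_def by blast

lemma comp_eq_iff: "comp x = comp y \<longleftrightarrow> (x, y) \<in> R\<^sup>*"
proof -
  have "equiv UNIV (R\<^sup>*)"
    by (rule equivI) (auto simp: refl_on_def sym_rtrancl[OF sym_R] trans_rtrancl)
  from equiv_class_eq_iff[OF this, of x y] show ?thesis
    unfolding comp_def by simp
qed

lemma comp_self: "x \<in> comp x"
  unfolding mem_comp_iff by simp

lemma comp_eq_iff_mem: "comp x = comp y \<longleftrightarrow> y \<in> comp x"
  unfolding comp_eq_iff mem_comp_iff ..

lemma comp_subset_if_closed:
  assumes "R `` S \<subseteq> S" "x \<in> S"
  shows "comp x \<subseteq> S"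
proof -
  have "R\<^sup>* `` {x} \<subseteq> R\<^sup>* `` S"
    using assms(2) by (intro Image_mono) simp_all
  then show ?thesis
    unfolding comp_def Image_closed_trancl[OF assms(1)] .
qed

lemma comps_eq: "comps = comp ` {x. fst x \<le> 2 \<and> snd x \<in> A}"
proof -
  have "\<Union>(((`) lay1) ` diag (p1, t1)) \<union> \<Union>(((`) lay2) ` diag (p2, t2)) = {x. (x, x) \<in> R}"
    unfolding stack_rel_def by blast
  then show ?thesis
    unfolding stack_comps_def quotient_def comp_def stack_rel_refl_iff
    by (simp only: UNION_singleton_eq_range)
qed

lemma stack_rel_imp_refl: "(x, y) \<in> R \<Longrightarrow> (y, y) \<in> R"
  unfolding stack_rel_def by blast

lemma mem_comps_bound:
  assumes "C \<in> comps" "c \<in> C"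
  shows "fst c \<le> 2 \<and> snd c \<in> A"
proof -
  define U where "U = {x :: nat \<times> vtx. fst x \<le> 2 \<and> snd x \<in> A}"
  obtain x where "x \<in> U" "C = comp x"
    using assms(1) unfolding comps_eq U_def by blast
  moreover have "R `` U \<subseteq> U"
    unfolding U_def using stack_rel_imp_refl stack_rel_refl_iff by blast
  ultimately show ?thesis
    using comp_subset_if_closed assms(2) unfolding U_def by blast
qed

lemma comps_eq_comp: "C \<in> comps \<Longrightarrow> c \<in> C \<Longrightarrow> C = comp c"
  unfolding comps_eq using comp_eq_iff mem_comp_iff by blast

lemma comp_mem_comps: "v \<in> A \<Longrightarrow> n \<le> 2 \<Longrightarrow> comp (n, v) \<in> comps"
  unfolding comps_eq by simp

lemma finite_comps: "finite comps"
proof -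
  have "{x :: nat \<times> vtx. fst x \<le> 2 \<and> snd x \<in> A} \<subseteq> {..2} \<times> A"
    by auto
  then show ?thesis
    unfolding comps_eq using finite_A by (meson finite_SigmaI finite_atMost finite_imageI finite_subset)
qed

lemma block_comp_eq1:
  assumes "B \<in> p1" "v \<in> B"
  shows "block_comp B = comp (1, v)"
proof -
  have "(SOME v. v \<in> B) \<in> B"
    using assms(2) by (rule someI)
  then have "((1, SOME v. v \<in> B), (1, v)) \<in> R"
    unfolding stack_rel_iff using assms by auto
  then show ?thesis
    unfolding block_comp_def comp_eq_iff by blast
qed

lemma block_comp_eq2:
  assumes "B \<in> p2" "v \<in> B"
  shows "block_comp B = comp (1, v)"
proof -
  have "(SOME v. v \<in> B) \<in> B"
    using assms(2) by (rule someI)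
  then have "((1, SOME v. v \<in> B), (1, v)) \<in> R"
    unfolding stack_rel_iff using assms by auto
  then show ?thesis
    unfolding block_comp_def comp_eq_iff by blast
qed

lemma top_mem_comp: "B \<in> t1 \<Longrightarrow> v \<in> B \<Longrightarrow> (0, v) \<in> comp (1, v)"
  unfolding mem_comp_iff using t1 by (intro r_into_rtrancl) (auto simp: stack_rel_iff intro!: disjI1)

lemma bottom_mem_comp: "B \<in> t2 \<Longrightarrow> v \<in> B \<Longrightarrow> (2, v) \<in> comp (1, v)"
  unfolding mem_comp_iff using t2 by (intro r_into_rtrancl) (auto simp: stack_rel_iff intro!: disjI2)

lemma comp_top_subset:
  assumes B: "B \<in> p1 - t1" and v: "v \<in> B"
  shows "comp (0, v) \<subseteq> Pair 0 ` B"
proof (rule comp_subset_if_closed)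
  show "R `` Pair 0 ` B \<subseteq> Pair 0 ` B"
  proof
    fix y assume "y \<in> R `` Pair 0 ` B"
    then obtain w where w: "w \<in> B" "((0, w), y) \<in> R"
      by blast
    then obtain B' where B': "B' \<in> p1" "w \<in> B'" "snd y \<in> B'" "fst y = 0 \<or> B' \<in> t1"
      unfolding stack_rel_iff by auto
    then have "B' = B"
      using partition_on_block_eq[OF p1] B w(1) by blast
    then show "y \<in> Pair 0 ` B"
      using B B' by (cases y) auto
  qed
qed (use v in simp)

lemma comp_bottom_subset:
  assumes B: "B \<in> p2 - t2" and v: "v \<in> B"
  shows "comp (2, v) \<subseteq> Pair 2 ` B"
proof (rule comp_subset_if_closed)
  show "R `` Pair 2 ` B \<subseteq> Pair 2 ` B"
  proof
    fix y assume "y \<in> R `` Pair 2 ` B"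
    then obtain w where w: "w \<in> B" "((2, w), y) \<in> R"
      by blast
    then obtain B' where B': "B' \<in> p2" "w \<in> B'" "snd y \<in> B'" "fst y = 2 \<or> B' \<in> t2"
      unfolding stack_rel_iff by auto
    then have "B' = B"
      using partition_on_block_eq[OF p2] B w(1) by blast
    then show "y \<in> Pair 2 ` B"
      using B B' by (cases y) auto
  qed
qed (use v in simp)

lemma mid_comps_subset1: "mid_comps \<subseteq> block_comp ` (p1 - t1)"
proof
  fix C assume "C \<in> mid_comps"
  then have C: "C \<in> comps" "\<forall>c\<in>C. fst c = 1"
    unfolding mid_comps_def by auto
  then obtain x where "x \<in> C"
    unfolding comps_eq using comp_self by blast
  then obtain v where v: "(1, v) \<in> C" "v \<in> A"
    using C mem_comps_bound by (metis prod.collapse)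
  then obtain B where B: "B \<in> p1" "v \<in> B"
    using partition_onD1[OF p1] by blast
  have C_eq: "C = comp (1, v)"
    using comps_eq_comp C(1) v(1) .
  have "B \<notin> t1"
    using top_mem_comp[OF _ B(2)] C(2) C_eq by fastforce
  then show "C \<in> block_comp ` (p1 - t1)"
    using block_comp_eq1[OF B] B C_eq by blast
qed

lemma mid_comps_subset2: "mid_comps \<subseteq> block_comp ` (p2 - t2)"
proof
  fix C assume "C \<in> mid_comps"
  then have C: "C \<in> comps" "\<forall>c\<in>C. fst c = 1"
    unfolding mid_comps_def by auto
  then obtain x where "x \<in> C"
    unfolding comps_eq using comp_self by blast
  then obtain v where v: "(1, v) \<in> C" "v \<in> A"
    using C mem_comps_bound by (metis prod.collapse)
  then obtain B where B: "B \<in> p2" "v \<in> B"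
    using partition_onD1[OF p2] by blast
  have C_eq: "C = comp (1, v)"
    using comps_eq_comp C(1) v(1) .
  have "B \<notin> t2"
    using bottom_mem_comp[OF _ B(2)] C(2) C_eq by fastforce
  then show "C \<in> block_comp ` (p2 - t2)"
    using block_comp_eq2[OF B] B C_eq by blast
qed

lemma through_comps_subset1: "through_comps \<subseteq> block_comp ` t1"
proof
  fix C assume "C \<in> through_comps"
  then obtain v w where C: "C \<in> comps" "(0, v) \<in> C" "(2, w) \<in> C"
    unfolding through_comps_def by blast
  then obtain B where B: "B \<in> p1" "v \<in> B"
    using mem_comps_bound[OF C(1,2)] partition_onD1[OF p1] by auto
  have C_eq: "C = comp (0, v)"
    using comps_eq_comp C(1,2) .
  have "B \<in> t1"
  proof (rule ccontr)
    assume "B \<notin> t1"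
    then have "(2, w) \<in> Pair (0::nat) ` B"
      using comp_top_subset[of B v] B C(3) C_eq by blast
    then show False
      by auto
  qed
  moreover have "block_comp B = C"
    using block_comp_eq1[OF B] top_mem_comp[OF calculation B(2)] C_eq comp_eq_iff_mem by simp
  ultimately show "C \<in> block_comp ` t1"
    by blast
qed

lemma through_comps_subset2: "through_comps \<subseteq> block_comp ` t2"
proof
  fix C assume "C \<in> through_comps"
  then obtain v w where C: "C \<in> comps" "(2, v) \<in> C" "(0, w) \<in> C"
    unfolding through_comps_def by blast
  then obtain B where B: "B \<in> p2" "v \<in> B"
    using mem_comps_bound[OF C(1,2)] partition_onD1[OF p2] by auto
  have C_eq: "C = comp (2, v)"
    using comps_eq_comp C(1,2) .
  have "B \<in> t2"
  proof (rule ccontr)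
    assume "B \<notin> t2"
    then have "(0, w) \<in> Pair (2::nat) ` B"
      using comp_bottom_subset[of B v] B C(3) C_eq by blast
    then show False
      by auto
  qed
  moreover have "block_comp B = C"
    using block_comp_eq2[OF B] bottom_mem_comp[OF calculation B(2)] C_eq comp_eq_iff_mem by simp
  ultimately show "C \<in> block_comp ` t2"
    by blast
qed

lemma mid_through_disjoint: "mid_comps \<inter> through_comps = {}"
  unfolding mid_comps_def through_comps_def by force

lemma finite_blocks: "finite p1" "finite p2" "finite t1" "finite t2"
  using finite_elements[OF finite_A p1] finite_elements[OF finite_A p2] t1 t2
  by (auto intro: finite_subset)

lemma card_mid_comps_le: "card mid_comps \<le> card (p1 - t1)" "card mid_comps \<le> card (p2 - t2)"
  using surj_card_le[OF _ mid_comps_subset1] surj_card_le[OF _ mid_comps_subset2] finite_blocks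
  by simp_all

lemma card_through_comps_le: "card through_comps \<le> card t1"
  using surj_card_le[OF _ through_comps_subset1] finite_blocks by simp

lemma eq_if_card_extremal:
  assumes "card (p1 - t1) \<le> card mid_comps" "card (p2 - t2) \<le> card mid_comps"
    and "card t1 \<le> card through_comps" "card t2 \<le> card through_comps"
  shows "p1 = p2 \<and> t1 = t2"
proof -
  \<comment> \<open>At equality \<open>block_comp\<close> is injective on \<open>p1\<close> and on \<open>p2\<close>, so on either side a block is
    the fibre of \<open>\<lambda>v. comp (1, v)\<close> through any of its points.\<close>
  have mid: "mid_comps = block_comp ` (p1 - t1)" "inj_on block_comp (p1 - t1)"
    "mid_comps = block_comp ` (p2 - t2)" "inj_on block_comp (p2 - t2)"
    using image_eq_inj_on_if_card_le[OF _ mid_comps_subset1 assms(1)]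
      image_eq_inj_on_if_card_le[OF _ mid_comps_subset2 assms(2)] finite_blocks by auto
  have through: "through_comps = block_comp ` t1" "inj_on block_comp t1"
    "through_comps = block_comp ` t2" "inj_on block_comp t2"
    using image_eq_inj_on_if_card_le[OF _ through_comps_subset1 assms(3)]
      image_eq_inj_on_if_card_le[OF _ through_comps_subset2 assms(4)] finite_blocks by auto
  have inj: "inj_on block_comp p" and tagged: "T = {B \<in> p. block_comp B \<in> through_comps}"
    if "T \<subseteq> p" "mid_comps = block_comp ` (p - T)" "inj_on block_comp (p - T)"
      "through_comps = block_comp ` T" "inj_on block_comp T" for p T
  proof -
    have "p = (p - T) \<union> T" "(p - T) - T = p - T" "T - (p - T) = T"
      using that(1) by auto
    then show "inj_on block_comp p"
      using that(2-5) mid_through_disjoint inj_on_Un[of block_comp "p - T" T] by metis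
    show "T = {B \<in> p. block_comp B \<in> through_comps}"
      using that(1,2,4) mid_through_disjoint by blast
  qed
  have "p1 = p2"
    using partition_on_eq_fibers[where h = "\<lambda>v. comp (1, v)",
        OF p1 block_comp_eq1 inj[OF t1 mid(1,2) through(1,2)]]
      partition_on_eq_fibers[where h = "\<lambda>v. comp (1, v)",
        OF p2 block_comp_eq2 inj[OF t2 mid(3,4) through(3,4)]]
    by simp
  moreover have "t1 = t2"
    using tagged[OF t1 mid(1,2) through(1,2)] tagged[OF t2 mid(3,4) through(3,4)] calculation by simp
  ultimately show ?thesis ..
qed

lemma mem_outer_rows_iff:
  assumes "C \<in> comps"
  shows "(r, v) \<in> outer_rows C \<longleftrightarrow> (if r then 2 else 0, v) \<in> C"
  unfolding outer_rows_def
proof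
  assume "(r, v) \<in> unlay ` (C \<inter> {c. fst c \<noteq> 1})"
  then obtain c where "c \<in> C" "fst c \<noteq> 1" "unlay c = (r, v)"
    by force
  moreover have "fst c \<le> 2"
    using mem_comps_bound assms calculation(1) by blast
  ultimately have "fst c = (if r then 2 else 0)" "snd c = v"
    unfolding unlay_def by auto
  then show "(if r then 2 else 0, v) \<in> C"
    using \<open>c \<in> C\<close> by (metis prod.collapse)
next
  assume "(if r then 2 else 0, v) \<in> C"
  then show "(r, v) \<in> unlay ` (C \<inter> {c. fst c \<noteq> 1})"
    by (intro image_eqI[of _ _ "(if r then 2 else 0, v)"]) (auto simp: unlay_def)
qed

lemma prop_num_eq_card_through_comps:
  "prop_num (diag_prod (diag (p1, t1)) (diag (p2, t2))) = card through_comps"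
proof -
  have "inj_on outer_rows through_comps"
  proof (rule inj_onI)
    fix C C' assume C: "C \<in> through_comps" "C' \<in> through_comps" "outer_rows C = outer_rows C'"
    then obtain v where "(0, v) \<in> C"
      unfolding through_comps_def by blast
    then have "(0, v) \<in> C'"
      using C mem_outer_rows_iff[of C False v] mem_outer_rows_iff[of C' False v]
      unfolding through_comps_def by auto
    then show "C = C'"
      using comps_eq_comp \<open>(0, v) \<in> C\<close> C(1,2) unfolding through_comps_def by blast
  qed
  moreover have "{B \<in> diag_prod (diag (p1, t1)) (diag (p2, t2)). (\<exists>v. (False, v) \<in> B) \<and> (\<exists>v. (True, v) \<in> B)}
      = outer_rows ` through_comps" (is "?through_blocks = _")
  proof (intro equalityI subsetI)
    fix X assume "X \<in> ?through_blocks"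
    then obtain C v w where C: "C \<in> comps" "X = outer_rows C" "(False, v) \<in> X" "(True, w) \<in> X"
      unfolding diag_prod_def outer_rows_def by blast
    then have "(0, v) \<in> C" "(2, w) \<in> C"
      using mem_outer_rows_iff[OF C(1)] C by auto
    then have "C \<in> through_comps"
      unfolding through_comps_def using C(1) by blast
    then show "X \<in> outer_rows ` through_comps"
      using C(2) by blast
  next
    fix X assume "X \<in> outer_rows ` through_comps"
    then obtain C v w where C: "C \<in> comps" "X = outer_rows C" "(0, v) \<in> C" "(2, w) \<in> C"
      unfolding through_comps_def by blast
    then have "(False, v) \<in> X" "(True, w) \<in> X"
      using mem_outer_rows_iff[OF C(1)] C by auto
    moreover have "X \<in> diag_prod (diag (p1, t1)) (diag (p2, t2))"
      unfolding diag_prod_def using C unfolding outer_rows_def by force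
    ultimately show "X \<in> ?through_blocks"
      by blast
  qed
  ultimately show ?thesis
    unfolding prop_num_def by (simp add: card_image)
qed

lemma card_blocks_le_comps_if_same:
  assumes "p2 = p1" "t2 = t1"
  shows "card (p1 - t1) \<le> card mid_comps" "card t1 \<le> card through_comps"
proof -
  have closed: "comp (1, v) \<subseteq> {c. snd c \<in> B \<and> (B \<notin> t1 \<longrightarrow> fst c = 1)}"
    if B: "B \<in> p1" "v \<in> B" for B v
  proof (rule comp_subset_if_closed)
    show "R `` {c. snd c \<in> B \<and> (B \<notin> t1 \<longrightarrow> fst c = 1)} \<subseteq> {c. snd c \<in> B \<and> (B \<notin> t1 \<longrightarrow> fst c = 1)}"
    proof
      fix y assume "y \<in> R `` {c. snd c \<in> B \<and> (B \<notin> t1 \<longrightarrow> fst c = 1)}"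
      then obtain x where x: "(x, y) \<in> R" "snd x \<in> B" "B \<notin> t1 \<longrightarrow> fst x = 1"
        by blast
      then obtain B' where B': "B' \<in> p1" "snd x \<in> B'" "snd y \<in> B'" "fst x = fst y \<or> B' \<in> t1"
        using x(1)[unfolded stack_rel_iff] assms by blast
      then have "B' = B"
        using partition_on_block_eq[OF p1] B x(2) by blast
      then show "y \<in> {c. snd c \<in> B \<and> (B \<notin> t1 \<longrightarrow> fst c = 1)}"
        using x B' by auto
    qed
  qed (use B in simp)
  have mid_comp_mem: "comp (1, v) \<in> comps" if "B \<in> p1" "v \<in> B" for B v
    using partition_onD1[OF p1] that by (intro comp_mem_comps) auto
  have inj: "inj_on block_comp p1"
  proof (rule inj_onI)
    fix B B' assume B: "B \<in> p1" "B' \<in> p1" "block_comp B = block_comp B'"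
    obtain v v' where v: "v \<in> B" "v' \<in> B'"
      using partition_onD3[OF p1] B by (metis equals0I)
    then have "(1, v') \<in> comp (1, v)"
      using B block_comp_eq1 comp_self by metis
    then have "v' \<in> B"
      using closed[OF B(1) v(1)] by auto
    then show "B = B'"
      using partition_on_block_eq[OF p1 B(1,2) _ v(2)] by simp
  qed
  have "block_comp ` (p1 - t1) \<subseteq> mid_comps"
  proof
    fix C assume "C \<in> block_comp ` (p1 - t1)"
    then obtain B where B: "B \<in> p1" "B \<notin> t1" "C = block_comp B"
      by blast
    then obtain v where v: "v \<in> B"
      using partition_onD3[OF p1] by (metis equals0I)
    then have "C = comp (1, v)"
      using block_comp_eq1[OF B(1)] B(3) by simp
    then show "C \<in> mid_comps"
      unfolding mid_comps_def using mid_comp_mem[OF B(1) v] closed[OF B(1) v] B(2) by auto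
  qed
  then show "card (p1 - t1) \<le> card mid_comps"
    using card_inj_on_le[OF inj_on_subset[OF inj]] finite_comps unfolding mid_comps_def by simp
  have "block_comp ` t1 \<subseteq> through_comps"
  proof
    fix C assume "C \<in> block_comp ` t1"
    then obtain B where B: "B \<in> t1" "C = block_comp B"
      by blast
    then have Bp: "B \<in> p1"
      using t1 by blast
    then obtain v where v: "v \<in> B"
      using partition_onD3[OF p1] by (metis equals0I)
    then have "C = comp (1, v)"
      using block_comp_eq1[OF Bp] B(2) by simp
    moreover have "(0, v) \<in> comp (1, v)" "(2, v) \<in> comp (1, v)"
      using top_mem_comp[OF B(1) v] bottom_mem_comp[of B v] B(1) v assms by simp_all
    ultimately show "C \<in> through_comps"
      unfolding through_comps_def using mid_comp_mem[OF Bp v] by blast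
  qed
  then show "card t1 \<le> card through_comps"
    using card_inj_on_le[OF inj_on_subset[OF inj t1]] finite_comps unfolding through_comps_def by simp
qed

end


section \<open>The Gram matrix\<close>

lemma finite_base: "finite (base k)"
  unfolding base_def by simp

lemma Jset_D:
  assumes "(p, t) \<in> Jset k s1 s2"
  shows "partition_on (base k) p" "t \<subseteq> p" "card t = 2 * s1 + s2"
proof -
  show p: "partition_on (base k) p" and t: "t \<subseteq> p"
    using assms unfolding Jset_def Z2_stable_partition_def by auto
  have "gact ` gact ` B = B" for B
    by (force simp: gact_def image_image)
  moreover have "finite t"
    using finite_elements[OF finite_base p] t by (rule finite_subset[rotated])
  ultimately show "card t = 2 * s1 + s2"
    using assms card_involution_orbits[of t "(`) gact"] unfolding Jset_def by auto
qed

lemma finite_Jset: "finite (Jset k s1 s2)"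
proof (rule finite_subset)
  show "Jset k s1 s2 \<subseteq> Pow (Pow (base k)) \<times> Pow (Pow (base k))"
    using Jset_D partition_onD1 by fastforce
qed (simp add: finite_base)

lemma gram_entry_diag:
  assumes "D \<in> Jset k s1 s2"
  shows "gram_entry s1 s2 D D = monom 1 (card (fst D - snd D))"
proof -
  obtain p t where D: "D = (p, t)"
    by fastforce
  interpret stacked_diagrams "base k" p t p t
    using Jset_D[OF assms[unfolded D]] finite_base by unfold_locales
  have "lmid (diag D) (diag D) = card (p - t)"
    using card_blocks_le_comps_if_same card_mid_comps_le unfolding D lmid_def mid_comps_def
    by (simp add: le_antisym)
  moreover have "prop_num (diag_prod (diag D) (diag D)) = 2 * s1 + s2"
    using card_blocks_le_comps_if_same card_through_comps_le Jset_D(3)[OF assms[unfolded D]]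
    unfolding D prop_num_eq_card_through_comps by simp
  ultimately show ?thesis
    unfolding gram_entry_def D by simp
qed

lemma gram_entry_off_diag:
  assumes D: "D \<in> Jset k s1 s2" and E: "E \<in> Jset k s1 s2" and "D \<noteq> E"
    and nonzero: "gram_entry s1 s2 D E \<noteq> 0"
  shows "2 * degree (gram_entry s1 s2 D E) < card (fst D - snd D) + card (fst E - snd E)"
proof -
  obtain p1 t1 p2 t2 where DE: "D = (p1, t1)" "E = (p2, t2)"
    by fastforce
  interpret stacked_diagrams "base k" p1 t1 p2 t2
    using Jset_D[OF D[unfolded DE(1)]] Jset_D[OF E[unfolded DE(2)]] finite_base by unfold_locales
  have "card through_comps = 2 * s1 + s2"
    using nonzero unfolding gram_entry_def DE prop_num_eq_card_through_comps by (auto split: if_splits)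
  then have "\<not> (card (p1 - t1) \<le> card mid_comps \<and> card (p2 - t2) \<le> card mid_comps)"
    using eq_if_card_extremal Jset_D(3) D E \<open>D \<noteq> E\<close> unfolding DE by auto
  moreover have "gram_entry s1 s2 D E = monom 1 (card mid_comps)"
    using nonzero unfolding gram_entry_def DE lmid_def mid_comps_def by (auto split: if_splits)
  ultimately show ?thesis
    using card_mid_comps_le unfolding DE by (simp add: degree_monom_eq, linarith)
qed

theorem lemma3p9:
  fixes k s1 s2 :: nat
  assumes "k \<ge> 1" and "s1 + s2 \<le> k"
  shows "gram_det k s1 s2 \<noteq> 0 \<and> lead_coeff (gram_det k s1 s2) = 1"
proof -
  have "lead_coeff (gram_det k s1 s2) = 1"
    unfolding gram_det_def
    by (rule det_on_monic(2)[where f = "\<lambda>D. card (fst D - snd D)"])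
      (simp_all add: finite_Jset gram_entry_diag gram_entry_off_diag)
  then show ?thesis
    by auto
qed

end
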